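(* Let $b\ge1$, $g=4b^2$, and let $D$ be a digraph with directed girth at least $g$ such that for every arc $(x,y)\in A(D)$, either $D$ contains a directed cycle of length exactly $g$ through $(x,y)$, or there is $z\in V(D)\setminus\{x,y\}$ with $(z,x),(z,y)\in A(D)$. Then for every $(p,q)\in A(D)$ there is a gadget $G$ contained in $D$ which is either of type I or an extended gadget of type II, with $p(G)=p$, $q(G)=q$ and $|V(G)|\le 2g$.
   Context: Digraphs are finite, loopless, without parallel arcs (digons allowed); the directed girth is the minimum length of a directed cycle. Gadgets have designated vertices $p,q$ with arc $(p,q)$. Type I: a directed cycle of length at least $g$ through $(p,q)$. Basic type II: vertices $p,q,r$ and a directed path $P_1$ from $r$ to $p$ of length at least $2b^2+b-2$ with $q\notin V(P_1)$, every vertex of $P_1$ having an arc to $q$. Extended type II: a basic type-II gadget plus a directed path $P_2$ of length at least $b$ whose last vertex is $r$, with $V(P_1)\cap V(P_2)=\{r\}$, $q\notin V(P_2)$, and either an arc from the first vertex of $P_2$ to the second vertex of $P_1$, or an arc from some vertex of $V(P_1)\setminus\{r\}$ to the first vertex of $P_2$. *)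

theory Defs
  imports Main
begin

text \<open>A digraph is a finite vertex set V with an arc relation A \<subseteq> V \<times> V,
  loopless; A being a set excludes parallel arcs, digons are allowed.\<close>
definition digraph :: "'a set \<Rightarrow> ('a \<times> 'a) set \<Rightarrow> bool" where
  "digraph V A \<longleftrightarrow> finite V \<and> A \<subseteq> V \<times> V \<and> (\<forall>x. (x, x) \<notin> A)"

text \<open>A directed cycle, given as the cyclic list of its (distinct) vertices;
  its length is the number of vertices (= number of arcs).\<close>
definition dcycle :: "'a set \<Rightarrow> ('a \<times> 'a) set \<Rightarrow> 'a list \<Rightarrow> bool" where
  "dcycle V A cs \<longleftrightarrow> cs \<noteq> [] \<and> distinct cs \<and> set cs \<subseteq> V \<and>
     (\<forall>i < length cs. (cs ! i, cs ! ((i + 1) mod length cs)) \<in> A)"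

definition cycle_through :: "'a list \<Rightarrow> 'a \<Rightarrow> 'a \<Rightarrow> bool" where
  "cycle_through cs x y \<longleftrightarrow>
     (\<exists>i < length cs. cs ! i = x \<and> cs ! ((i + 1) mod length cs) = y)"

definition girth_ge :: "'a set \<Rightarrow> ('a \<times> 'a) set \<Rightarrow> nat \<Rightarrow> bool" where
  "girth_ge V A g \<longleftrightarrow> (\<forall>cs. dcycle V A cs \<longrightarrow> length cs \<ge> g)"

text \<open>A directed path, given as the list of its distinct vertices; its length is
  the number of arcs, i.e. length ps - 1.\<close>
definition dpath :: "'a set \<Rightarrow> ('a \<times> 'a) set \<Rightarrow> 'a list \<Rightarrow> bool" where
  "dpath V A ps \<longleftrightarrow> ps \<noteq> [] \<and> distinct ps \<and> set ps \<subseteq> V \<and>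
     (\<forall>i. Suc i < length ps \<longrightarrow> (ps ! i, ps ! Suc i) \<in> A)"

definition typeI_gadget :: "'a set \<Rightarrow> ('a \<times> 'a) set \<Rightarrow> nat \<Rightarrow> 'a \<Rightarrow> 'a \<Rightarrow> 'a list \<Rightarrow> bool" where
  "typeI_gadget V A g p q cs \<longleftrightarrow> dcycle V A cs \<and> length cs \<ge> g \<and> cycle_through cs p q"

text \<open>Basic type II gadget in D with designated p, q, r and path P1 from r to p
  of length at least 2b^2+b-2, q not on P1, each vertex of P1 has an arc to q;
  its vertex set is set P1 \<union> {q}.  (The arc (p,q) is included, as p is on P1.)\<close>
definition basic_typeII :: "'a set \<Rightarrow> ('a \<times> 'a) set \<Rightarrow> nat \<Rightarrow> 'a \<Rightarrow> 'a \<Rightarrow> 'a \<Rightarrow> 'a list \<Rightarrow> bool" where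
  "basic_typeII V A b p q r P1 \<longleftrightarrow>
     (p, q) \<in> A \<and> q \<in> V \<and> dpath V A P1 \<and> hd P1 = r \<and> last P1 = p \<and>
     length P1 - 1 \<ge> 2 * b^2 + b - 2 \<and> q \<notin> set P1 \<and>
     (\<forall>v \<in> set P1. (v, q) \<in> A)"

text \<open>Vertex set: set P1 \<union> set P2 \<union> {q}.\<close>
definition ext_typeII :: "'a set \<Rightarrow> ('a \<times> 'a) set \<Rightarrow> nat \<Rightarrow> 'a \<Rightarrow> 'a \<Rightarrow> 'a \<Rightarrow> 'a list \<Rightarrow> 'a list \<Rightarrow> bool" where
  "ext_typeII V A b p q r P1 P2 \<longleftrightarrow>
     basic_typeII V A b p q r P1 \<and> dpath V A P2 \<and> length P2 - 1 \<ge> b \<and>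
     last P2 = r \<and> set P1 \<inter> set P2 = {r} \<and> q \<notin> set P2 \<and>
     ((hd P2, P1 ! 1) \<in> A \<or> (\<exists>v \<in> set P1 - {r}. (v, hd P2) \<in> A))"

end

theory Submission
  imports Defs
begin

(* Fix an arc (p,q) and grow a path P1 ending at p all of whose vertices have an arc to q: as
   long as the arc from the first vertex of P1 to q lies on no g-cycle, the hypothesis supplies
   a common in-neighbour to prepend, and the girth bound keeps P1 a path. If growth stops at a
   g-cycle, that cycle followed by P1 closes into a type I gadget. Otherwise P1 reaches length
   2b^2+b-2; call its first two vertices r and t, and grow in the same way a path P2 into r whose
   vertices have arcs to t. Because P1 and P2 are short compared with g, P2 meets P1 and q only
   in r. If P2 reaches length b we have an extended type II gadget. If instead a g-cycle C
   passes through the arc from the first vertex of P2 to t, then either q lies on C, where it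
   must directly follow t, and C from q followed by P1 from t closes a type I gadget; or C avoids
   q, and the segment of C followed by P2 after the last visit to P1 - {r} is the path P2 of an
   extended type II gadget. *)

lemma dpath_iff_successively:
  "dpath V A ps \<longleftrightarrow>
     ps \<noteq> [] \<and> distinct ps \<and> set ps \<subseteq> V \<and> successively (\<lambda>x y. (x, y) \<in> A) ps"
  by (simp add: dpath_def successively_conv_nth)

lemma dpath_singleton [simp]: "dpath V A [x] \<longleftrightarrow> x \<in> V"
  by (simp add: dpath_def)

lemma dpath_not_Nil: "dpath V A ps \<Longrightarrow> ps \<noteq> []"
  by (simp add: dpath_def)

lemma dpath_Cons:
  "ps \<noteq> [] \<Longrightarrow>
     dpath V A (x # ps) \<longleftrightarrow> x \<in> V \<and> x \<notin> set ps \<and> (x, hd ps) \<in> A \<and> dpath V A ps"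
  by (auto simp: dpath_iff_successively successively_Cons)

lemma dpath_append:
  "xs \<noteq> [] \<Longrightarrow> ys \<noteq> [] \<Longrightarrow>
     dpath V A (xs @ ys) \<longleftrightarrow>
       dpath V A xs \<and> dpath V A ys \<and> set xs \<inter> set ys = {} \<and> (last xs, hd ys) \<in> A"
  by (auto simp: dpath_iff_successively successively_append_iff)

lemma dpath_appendD1: "dpath V A (xs @ ys) \<Longrightarrow> xs \<noteq> [] \<Longrightarrow> dpath V A xs"
  by (cases "ys = []") (auto simp: dpath_append)

lemma dpath_appendD2: "dpath V A (xs @ ys) \<Longrightarrow> ys \<noteq> [] \<Longrightarrow> dpath V A ys"
  by (cases "xs = []") (auto simp: dpath_append)

lemma last_append_tl: "xs \<noteq> [] \<Longrightarrow> ys \<noteq> [] \<Longrightarrow> last xs = hd ys \<Longrightarrow> last (xs @ tl ys) = last ys"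
  by (cases ys) auto

lemma dpath_append_tl:
  assumes "dpath V A xs" "dpath V A ys" "last xs = hd ys" "set xs \<inter> set ys \<subseteq> {hd ys}"
  shows "dpath V A (xs @ tl ys)"
proof (cases "tl ys = []")
  case False
  obtain y ys' where ys: "ys = y # ys'"
    using dpath_not_Nil[OF assms(2)] by (cases ys) auto
  then show ?thesis
    using assms False dpath_not_Nil[OF assms(1)] by (auto simp: dpath_append dpath_Cons)
qed (use assms(1) in simp)

lemma dcycle_iff_closed_dpath: "dcycle V A cs \<longleftrightarrow> dpath V A cs \<and> (last cs, hd cs) \<in> A"
proof (cases "cs = []")
  case False
  let ?n = "length cs"
  have "(\<forall>i < ?n. (cs ! i, cs ! ((i + 1) mod ?n)) \<in> A) \<longleftrightarrow>
        (\<forall>i. Suc i < ?n \<longrightarrow> (cs ! i, cs ! Suc i) \<in> A) \<and> (cs ! (?n - 1), cs ! 0) \<in> A"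
  proof -
    have "i < ?n \<longleftrightarrow> Suc i < ?n \<or> i = ?n - 1" for i
      using False by (cases cs) auto
    moreover have "(?n - 1 + 1) mod ?n = 0"
      using False by simp
    ultimately show ?thesis
      by (smt (verit) Suc_eq_plus1 mod_less)
  qed
  with False show ?thesis
    by (simp add: dcycle_def dpath_def hd_conv_nth last_conv_nth)
qed (simp add: dcycle_def dpath_def)

lemma dcycle_rotate: "dcycle V A (xs @ ys) \<Longrightarrow> dcycle V A (ys @ xs)"
  by (cases "xs = [] \<or> ys = []") (auto simp: dcycle_iff_closed_dpath dpath_append)

lemma cycle_through_last_hd: "cs \<noteq> [] \<Longrightarrow> cycle_through cs (last cs) (hd cs)"
  unfolding cycle_through_def
  by (rule exI[of _ "length cs - 1"]) (simp add: hd_conv_nth last_conv_nth)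

lemma dcycle_cut_at_arc:
  assumes "dcycle V A cs" "cycle_through cs x y"
  obtains P where "dpath V A P" "hd P = y" "last P = x" "length P = length cs"
proof -
  obtain i where i: "i < length cs" "cs ! i = x" "cs ! ((i + 1) mod length cs) = y"
    using assms(2) unfolding cycle_through_def by blast
  define P where "P = drop (Suc i) cs @ take (Suc i) cs"
  have "dcycle V A P"
    using dcycle_rotate[of V A "take (Suc i) cs"] assms(1) by (simp add: P_def)
  moreover have "hd P = y"
  proof (cases "Suc i < length cs")
    case True
    then show ?thesis
      using i by (simp add: P_def hd_append hd_drop_conv_nth)
  next
    case False
    then have "Suc i = length cs"
      using i(1) by simp
    moreover have "cs \<noteq> []"
      using i(1) by auto
    ultimately show ?thesis
      using i by (simp add: P_def hd_conv_nth)
  qed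
  moreover have "last P = x"
    using i by (simp add: P_def take_Suc_conv_app_nth)
  moreover have "length P = length cs"
    using i(1) by (simp add: P_def)
  ultimately show thesis
    using that dcycle_iff_closed_dpath by blast
qed

lemma girth_le_closed_dpath:
  "girth_ge V A g \<Longrightarrow> dpath V A P \<Longrightarrow> (last P, hd P) \<in> A \<Longrightarrow> g \<le> length P"
  by (auto simp: girth_ge_def dcycle_iff_closed_dpath)

lemma girth_le_prefix_with_back_arc:
  assumes "girth_ge V A g" "dpath V A (xs @ x # ys)" "(x, hd (xs @ x # ys)) \<in> A"
  shows "g \<le> Suc (length xs)"
proof -
  have "dpath V A (xs @ [x])"
    using dpath_appendD1[of V A "xs @ [x]" ys] assms(2) by simp
  moreover have "hd (xs @ [x]) = hd (xs @ x # ys)"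
    by (cases xs) auto
  ultimately show ?thesis
    using girth_le_closed_dpath[OF assms(1)] assms(3) by fastforce
qed

lemma girth_le_two_paths:
  assumes "girth_ge V A g" "dpath V A P" "dpath V A Q" "last P = hd Q"
    "set P \<inter> set Q \<subseteq> {hd Q}" "(last Q, hd P) \<in> A"
  shows "g + 1 \<le> length P + length Q"
proof -
  have "P \<noteq> []" "Q \<noteq> []"
    using assms(2,3) by (auto dest: dpath_not_Nil)
  then have "g \<le> length (P @ tl Q)"
    using girth_le_closed_dpath[OF assms(1) dpath_append_tl[OF assms(2-5)]] assms(4,6)
    by (simp add: last_append_tl)
  with \<open>Q \<noteq> []\<close> show ?thesis
    by (cases Q) auto
qed

lemma girth_le_return_path:
  assumes "girth_ge V A g" "dpath V A L" "x \<in> set L" "x \<noteq> hd L"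
    "dpath V A (x # ys)" "ys \<noteq> []" "last ys = hd L" "set ys \<inter> set L \<subseteq> {hd L}"
  shows "g + 1 \<le> length ys + length L"
proof -
  obtain as bs where L: "L = as @ x # bs"
    using split_list[OF assms(3)] by blast
  with assms(4) have "as \<noteq> []" "hd as = hd L"
    by (cases as; simp)+
  moreover have "dpath V A (as @ [x])"
    using dpath_appendD1[of V A "as @ [x]" bs] assms(2) L by simp
  ultimately have "dpath V A as" "(last as, x) \<in> A"
    using dpath_append[of as "[x]" V A] by auto
  moreover have "set (x # ys) \<inter> set as \<subseteq> {hd as}"
    using assms(2,8) L \<open>hd as = hd L\<close> by (auto simp: dpath_def)
  ultimately have "g + 1 \<le> length (x # ys) + length as"
    using girth_le_two_paths[OF assms(1,5)] assms(6,7) \<open>hd as = hd L\<close> by simp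
  then show ?thesis
    using L by simp
qed

lemma dpath_last_return:
  assumes "girth_ge V A g" "dpath V A L" "dpath V A W" "hd W \<in> set L" "hd W \<noteq> hd L"
    "last W = hd L"
  obtains x ys where "x \<in> set L - {hd L}" "(x, hd ys) \<in> A" "dpath V A ys" "last ys = hd L"
    "set L \<inter> set ys = {hd L}" "set ys \<subseteq> set W" "length ys < length W"
    "g + 1 \<le> length ys + length L"
proof -
  have "hd W \<in> set W"
    using dpath_not_Nil[OF assms(3)] by simp
  with assms(4,5) have "\<exists>x \<in> set W. x \<in> set L - {hd L}"
    by blast
  then obtain xs x ys where W: "W = xs @ x # ys" and x: "x \<in> set L - {hd L}"
    and ys: "\<forall>y \<in> set ys. y \<notin> set L - {hd L}"
    using split_list_last_prop[of W "\<lambda>x. x \<in> set L - {hd L}"] by blast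
  have "ys \<noteq> []"
    using W x assms(6) by auto
  then have "last ys = hd L"
    using W assms(6) by simp
  have "dpath V A (x # ys)"
    using dpath_appendD2[of V A xs "x # ys"] assms(3) W by simp
  then have "(x, hd ys) \<in> A" "dpath V A ys"
    using dpath_Cons[OF \<open>ys \<noteq> []\<close>] by auto
  have "hd L \<in> set L" "hd L \<in> set ys"
    using assms(2) dpath_not_Nil \<open>ys \<noteq> []\<close> \<open>last ys = hd L\<close> by (metis hd_in_set last_in_set)+
  with ys have "set L \<inter> set ys = {hd L}"
    by blast
  then have "g + 1 \<le> length ys + length L"
    using girth_le_return_path[OF assms(1,2) _ _ \<open>dpath V A (x # ys)\<close> \<open>ys \<noteq> []\<close>] x
      \<open>last ys = hd L\<close> by blast
  moreover have "set ys \<subseteq> set W" "length ys < length W"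
    using W by auto
  ultimately show thesis
    using that x \<open>(x, hd ys) \<in> A\<close> \<open>dpath V A ys\<close> \<open>last ys = hd L\<close> \<open>set L \<inter> set ys = {hd L}\<close>
    by blast
qed

lemma short_dpath_to_hd_meets_only_hd:
  assumes "girth_ge V A g" "dpath V A P" "dpath V A L" "last L = hd P"
    "length P + length L \<le> g + 1"
  shows "set L \<inter> set P = {hd P}"
proof (rule ccontr)
  assume "set L \<inter> set P \<noteq> {hd P}"
  moreover have "hd P \<in> set L \<inter> set P"
    using assms(2-4) dpath_not_Nil by (metis IntI hd_in_set last_in_set)
  ultimately obtain x where x: "x \<in> set L" "x \<in> set P" "x \<noteq> hd P"
    by blast
  then obtain xs ys where L: "L = xs @ x # ys"
    by (meson split_list)
  then have W: "dpath V A (x # ys)" "last (x # ys) = hd P"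
    using assms(3,4) dpath_appendD2[of V A xs "x # ys"] by auto
  have "hd (x # ys) \<in> set P" "hd (x # ys) \<noteq> hd P"
    using x by simp_all
  then show False
    by (rule dpath_last_return[OF assms(1,2) W(1) _ _ W(2)]) (use L assms(5) in auto)
qed

definition fan_to :: "'a set \<Rightarrow> ('a \<times> 'a) set \<Rightarrow> 'a \<Rightarrow> 'a list \<Rightarrow> bool" where
  "fan_to V A t L \<longleftrightarrow> dpath V A L \<and> t \<notin> set L \<and> (\<forall>x \<in> set L. (x, t) \<in> A)"

lemma fan_to_tl:
  "fan_to V A t L \<Longrightarrow> tl L \<noteq> [] \<Longrightarrow> fan_to V A t (tl L)"
  by (cases L) (auto simp: fan_to_def dpath_Cons)

definition on_cycle_of_length :: "'a set \<Rightarrow> ('a \<times> 'a) set \<Rightarrow> nat \<Rightarrow> 'a \<Rightarrow> 'a \<Rightarrow> bool" where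
  "on_cycle_of_length V A g x y \<longleftrightarrow> (\<exists>cs. dcycle V A cs \<and> length cs = g \<and> cycle_through cs x y)"

lemma fan_grows_or_closes:
  assumes "digraph V A" "girth_ge V A g"
    and arc_cond: "\<forall>(x, y) \<in> A. on_cycle_of_length V A g x y \<or>
                     (\<exists>z \<in> V - {x, y}. (z, x) \<in> A \<and> (z, y) \<in> A)"
    and "(u, t) \<in> A" "k < g"
  obtains L where "fan_to V A t L" "last L = u" "length L \<le> Suc k"
    "length L = Suc k \<or> on_cycle_of_length V A g (hd L) t"
proof -
  have "\<exists>L. fan_to V A t L \<and> last L = u \<and> length L \<le> Suc k \<and>
          (length L = Suc k \<or> on_cycle_of_length V A g (hd L) t)"
    using \<open>k < g\<close>
  proof (induction k)
    case 0
    have "fan_to V A t [u]"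
      using assms(1,4) by (auto simp: fan_to_def digraph_def)
    then show ?case
      by fastforce
  next
    case (Suc k)
    then obtain L where L: "fan_to V A t L" "last L = u" "length L \<le> Suc k"
      and grown: "length L = Suc k \<or> on_cycle_of_length V A g (hd L) t"
      by auto
    show ?case
    proof (cases "on_cycle_of_length V A g (hd L) t")
      case True
      with L show ?thesis
        by (intro exI[of _ L]) simp
    next
      case False
      have "L \<noteq> []" "(hd L, t) \<in> A"
        using L(1) by (auto simp: fan_to_def dest: dpath_not_Nil)
      with False arc_cond obtain z where z: "z \<in> V" "z \<noteq> t" "(z, hd L) \<in> A" "(z, t) \<in> A"
        by fastforce
      have "z \<notin> set L"
      proof
        assume "z \<in> set L"
        then obtain xs ys where "L = xs @ z # ys"
          by (meson split_list)
        then have "g \<le> Suc (length xs)" "Suc (length xs) \<le> length L"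
          using girth_le_prefix_with_back_arc[OF assms(2)] L(1) z(3) by (auto simp: fan_to_def)
        with False grown Suc.prems show False
          by simp
      qed
      then have "fan_to V A t (z # L)"
        using L(1) z \<open>L \<noteq> []\<close> by (auto simp: fan_to_def dpath_Cons)
      moreover have "last (z # L) = u" "length (z # L) = Suc (Suc k)"
        using L(2) False grown \<open>L \<noteq> []\<close> by auto
      ultimately show ?thesis
        by fastforce
    qed
  qed
  with that show thesis
    by blast
qed

lemma fan_closing_cycle:
  assumes "girth_ge V A g" "fan_to V A t L" "on_cycle_of_length V A g (hd L) t"
  obtains C where "dpath V A C" "hd C = t" "last C = hd L" "length C = g"
    "dpath V A (C @ tl L)" "last (C @ tl L) = last L"
proof -
  obtain C where C: "dpath V A C" "hd C = t" "last C = hd L" "length C = g"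
    using assms(3) dcycle_cut_at_arc unfolding on_cycle_of_length_def by metis
  have "set C \<inter> set L \<subseteq> {hd L}"
  proof
    fix x
    assume x: "x \<in> set C \<inter> set L"
    then obtain as bs where Cx: "C = as @ x # bs"
      by (meson IntD1 split_list)
    then have "g \<le> Suc (length as)"
      using girth_le_prefix_with_back_arc[OF assms(1)] C x assms(2) by (auto simp: fan_to_def)
    with C(4) Cx have "bs = []"
      by (cases bs) auto
    with C(3) Cx show "x \<in> {hd L}"
      by simp
  qed
  with C(1,3) assms(2) have "dpath V A (C @ tl L)"
    using dpath_append_tl by (auto simp: fan_to_def)
  moreover have "last (C @ tl L) = last L"
    using C(1,3) assms(2) last_append_tl by (auto simp: fan_to_def dest: dpath_not_Nil)
  ultimately show thesis
    using that C by blast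
qed

lemma cycle_through_fan_apex:
  assumes "girth_ge V A g" "fan_to V A q T" "dpath V A C" "hd C = hd T" "length C = g"
    "q \<in> set C" "(last C, hd C) \<in> A"
  obtains Z where "dpath V A Z" "hd Z = q" "last Z = last T" "length Z + 1 = g + length T"
proof -
  obtain as bs where C: "C = as @ q # bs"
    using split_list[OF assms(6)] by blast
  have "T \<noteq> []" "hd T \<noteq> q" "(hd T, q) \<in> A"
    using assms(2) hd_in_set by (auto simp: fan_to_def dest: dpath_not_Nil)
  then obtain as' where as: "as = hd T # as'"
    using C assms(4) by (cases as) auto
  have dq: "dpath V A (q # bs)"
    using dpath_appendD2[of V A as "q # bs"] assms(3) C by simp
  \<comment> \<open>Otherwise q..hd T on C and the arc (hd T, q) close a cycle shorter than g.\<close>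
  have "as' = []"
  proof (rule ccontr)
    assume "as' \<noteq> []"
    have "hd T \<notin> set (q # bs)" "hd T \<in> V"
      using assms(3) C as by (auto simp: dpath_def)
    then have "dpath V A ((q # bs) @ [hd T])"
      using dq assms(4,7) C dpath_append[of "q # bs" "[hd T]" V A] by simp
    then have "g \<le> length bs + 2"
      using girth_le_closed_dpath[OF assms(1)] \<open>(hd T, q) \<in> A\<close> by fastforce
    with \<open>as' \<noteq> []\<close> assms(5) C as show False
      by (cases as') auto
  qed
  have "set (q # bs) \<inter> set T = {}"
  proof (rule ccontr)
    assume "set (q # bs) \<inter> set T \<noteq> {}"
    then obtain y ys zs where split: "q # bs = ys @ y # zs" and "y \<in> set T"
      by (metis disjoint_iff split_list)
    then have "(y, hd (ys @ y # zs)) \<in> A"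
      using assms(2) by (metis fan_to_def list.sel(1))
    then have "g \<le> Suc (length ys)"
      using girth_le_prefix_with_back_arc[OF assms(1)] dq split by metis
    moreover have "length (q # bs) = length ys + length zs + 1"
      using arg_cong[OF split, of length] by simp
    ultimately have "g \<le> length (q # bs)"
      by linarith
    with assms(5) C as \<open>as' = []\<close> show False
      by simp
  qed
  then have "dpath V A ((q # bs) @ T)"
    using dq assms(2,4,7) C as \<open>as' = []\<close> \<open>T \<noteq> []\<close> dpath_append[of "q # bs" T V A]
    by (simp add: fan_to_def)
  moreover have "length ((q # bs) @ T) + 1 = g + length T"
    using assms(5) C as \<open>as' = []\<close> by simp
  ultimately show thesis
    using that \<open>T \<noteq> []\<close> by simp
qed

definition small_gadget :: "'a set \<Rightarrow> ('a \<times> 'a) set \<Rightarrow> nat \<Rightarrow> nat \<Rightarrow> 'a \<Rightarrow> 'a \<Rightarrow> bool" where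
  "small_gadget V A b g p q \<longleftrightarrow>
     (\<exists>cs. typeI_gadget V A g p q cs \<and> card (set cs) \<le> 2 * g) \<or>
     (\<exists>r P1 P2. ext_typeII V A b p q r P1 P2 \<and> card (set P1 \<union> set P2 \<union> {q}) \<le> 2 * g)"

lemma typeI_gadget_if_closed_dpath:
  assumes "dpath V A Z" "hd Z = q" "last Z = p" "(p, q) \<in> A" "g \<le> length Z"
  shows "typeI_gadget V A g p q Z" "card (set Z) = length Z"
  using assms dpath_not_Nil[OF assms(1)] cycle_through_last_hd[of Z]
  by (auto simp: typeI_gadget_def dcycle_iff_closed_dpath dpath_def distinct_card)

lemma small_gadget_if_closed_dpath:
  assumes "dpath V A Z" "hd Z = q" "last Z = p" "(p, q) \<in> A" "g \<le> length Z" "length Z \<le> 2 * g"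
  shows "small_gadget V A b g p q"
  unfolding small_gadget_def using typeI_gadget_if_closed_dpath[OF assms(1-5)] assms(6)
  by (intro disjI1 exI[of _ Z]) simp

lemma small_gadget_if_ext_typeII:
  assumes "ext_typeII V A b p q r P1 P2" "length P1 + length P2 < 2 * g"
  shows "small_gadget V A b g p q"
proof -
  have "card (set P1 \<union> set P2 \<union> {q}) \<le> card (set P1 \<union> set P2) + 1"
    using card_Un_le[of "set P1 \<union> set P2" "{q}"] by simp
  also have "\<dots> \<le> card (set P1) + card (set P2) + 1"
    using card_Un_le[of "set P1" "set P2"] by simp
  also have "\<dots> \<le> length P1 + length P2 + 1"
    by (simp add: card_length add_le_mono)
  finally have "card (set P1 \<union> set P2 \<union> {q}) \<le> 2 * g"
    using assms(2) by linarith
  with assms(1) show ?thesis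
    unfolding small_gadget_def by blast
qed

lemma small_gadget_if_fan_closes:
  assumes "girth_ge V A g" "(p, q) \<in> A" "fan_to V A q L" "last L = p" "length L \<le> Suc g"
    "on_cycle_of_length V A g (hd L) q"
  shows "small_gadget V A b g p q"
proof -
  obtain C where C: "dpath V A C" "hd C = q" "length C = g"
    "dpath V A (C @ tl L)" "last (C @ tl L) = p"
    using fan_closing_cycle[OF assms(1,3,6)] assms(4) by metis
  have "hd (C @ tl L) = q"
    using C(1,2) dpath_not_Nil by fastforce
  moreover have "g \<le> length (C @ tl L)" "length (C @ tl L) \<le> 2 * g"
    using C(3) assms(5) by auto
  ultimately show ?thesis
    using small_gadget_if_closed_dpath[OF C(4) _ C(5) assms(2)] by blast
qed

lemma small_gadget_if_second_fan_closes:
  assumes "b \<ge> 1" "g = 4 * b^2" "girth_ge V A g" "(p, q) \<in> A"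
    and basic: "basic_typeII V A b p q r L1" and L1: "L1 = r # t # rest" "length L1 = 2 * b^2 + b - 1"
    and L2: "fan_to V A t L2" "last L2 = r" "length L2 \<le> Suc b" "q \<notin> set L2"
    and closes: "on_cycle_of_length V A g (hd L2) t"
  shows "small_gadget V A b g p q"
proof -
  have "b \<le> b^2"
    by (simp add: power2_eq_square)
  have fan1: "fan_to V A q L1" "last L1 = p"
    using basic by (auto simp: basic_typeII_def fan_to_def)
  obtain C where C: "dpath V A C" "hd C = t" "last C = hd L2" "length C = g"
    "dpath V A (C @ tl L2)" "last (C @ tl L2) = r"
    using fan_closing_cycle[OF assms(3) L2(1) closes] L2(2) by metis
  show ?thesis
  proof (cases "q \<in> set C")
    case True
    have "fan_to V A q (t # rest)"
      using fan_to_tl[OF fan1(1)] L1(1) by simp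
    moreover have "hd C = hd (t # rest)"
      using C(2) by simp
    moreover have "(last C, hd C) \<in> A"
      using C(2,3) L2(1) dpath_not_Nil hd_in_set unfolding fan_to_def by metis
    ultimately obtain Z where Z: "dpath V A Z" "hd Z = q" "last Z = last (t # rest)"
      "length Z + 1 = g + length (t # rest)"
      by (rule cycle_through_fan_apex[OF assms(3) _ C(1) _ C(4) True])
    have "last Z = p"
      using Z(3) fan1(2) L1(1) by simp
    moreover have "g \<le> length Z" "length Z \<le> 2 * g"
      using Z(4) L1 assms(1,2) \<open>b \<le> b^2\<close> by simp_all
    ultimately show ?thesis
      using small_gadget_if_closed_dpath[OF Z(1,2) _ assms(4)] by blast
  next
    case False
    let ?W = "C @ tl L2"
    have "hd L1 = r" "dpath V A L1"
      using L1(1) fan1(1) by (simp_all add: fan_to_def)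
    have "hd ?W = t"
      using C(1,2) dpath_not_Nil by fastforce
    moreover have "t \<in> set L1" "t \<noteq> hd L1"
      using \<open>dpath V A L1\<close> L1(1) by (auto simp: dpath_def)
    ultimately obtain x ys where "x \<in> set L1 - {hd L1}" "(x, hd ys) \<in> A" "dpath V A ys"
      "last ys = hd L1" "set L1 \<inter> set ys = {hd L1}" "set ys \<subseteq> set ?W" "length ys < length ?W"
      "g + 1 \<le> length ys + length L1"
      using C(6) \<open>hd L1 = r\<close>
      by (rule_tac dpath_last_return[OF assms(3) \<open>dpath V A L1\<close> C(5)]) simp_all
    note ys = this[unfolded \<open>hd L1 = r\<close>]
    have "set (tl L2) \<subseteq> set L2"
      by (cases L2) auto
    then have "q \<notin> set ?W"
      using False L2(4) by auto
    then have "q \<notin> set ys"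
      using ys(6) by blast
    moreover have "b \<le> length ys - 1"
      using ys(8) L1(2) assms(1,2) \<open>b \<le> b^2\<close> by linarith
    moreover have "\<exists>v \<in> set L1 - {r}. (v, hd ys) \<in> A"
      using ys(1,2) by blast
    ultimately have "ext_typeII V A b p q r L1 ys"
      using basic ys(3-5) unfolding ext_typeII_def by simp
    moreover have "length ys < g + b"
      using ys(7) C(4) L2(3) by simp
    then have "length L1 + length ys < 2 * g"
      using L1(2) assms(1,2) \<open>b \<le> b^2\<close> by linarith
    ultimately show ?thesis
      by (rule small_gadget_if_ext_typeII)
  qed
qed

lemma small_gadget_if_fan_full:
  assumes "b \<ge> 1" "g = 4 * b^2" "digraph V A" "girth_ge V A g"
    and arc_cond: "\<forall>(x, y) \<in> A. on_cycle_of_length V A g x y \<or>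
                     (\<exists>z \<in> V - {x, y}. (z, x) \<in> A \<and> (z, y) \<in> A)"
    and "(p, q) \<in> A" "fan_to V A q L1" "last L1 = p" "length L1 = 2 * b^2 + b - 1"
  shows "small_gadget V A b g p q"
proof -
  have "b \<le> b^2"
    by (simp add: power2_eq_square)
  with assms(1,9) have "2 \<le> length L1"
    by linarith
  then obtain r t rest where L1: "L1 = r # t # rest"
    by (cases L1; cases "tl L1") auto
  have "dpath V A L1" "q \<notin> set L1" "\<forall>v \<in> set L1. (v, q) \<in> A"
    using assms(7) by (simp_all add: fan_to_def)
  then have "(r, t) \<in> A"
    using L1 by (simp add: dpath_Cons)
  have basic: "basic_typeII V A b p q r L1"
    using assms(3,6,8,9) L1 \<open>dpath V A L1\<close> \<open>q \<notin> set L1\<close> \<open>\<forall>v \<in> set L1. (v, q) \<in> A\<close>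
    unfolding basic_typeII_def digraph_def by auto
  have "b < g"
    using assms(1,2) \<open>b \<le> b^2\<close> by linarith
  obtain L2 where L2: "fan_to V A t L2" "last L2 = r" "length L2 \<le> Suc b"
    and grown: "length L2 = Suc b \<or> on_cycle_of_length V A g (hd L2) t"
    by (rule fan_grows_or_closes[OF assms(3,4) arc_cond \<open>(r, t) \<in> A\<close> \<open>b < g\<close>])
  have "q \<in> V"
    using assms(3,6) by (auto simp: digraph_def)
  then have "dpath V A (L1 @ [q])"
    using \<open>dpath V A L1\<close> \<open>q \<notin> set L1\<close> assms(6,8) L1 dpath_append[of L1 "[q]" V A] by simp
  moreover have "dpath V A L2" "last L2 = hd (L1 @ [q])"
    using L2(1,2) L1 by (simp_all add: fan_to_def)
  moreover have "length (L1 @ [q]) + length L2 \<le> g + 1"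
    using assms(1,2,9) L2(3) \<open>b \<le> b^2\<close> by simp
  ultimately have "set L2 \<inter> set (L1 @ [q]) = {hd (L1 @ [q])}"
    by (rule short_dpath_to_hd_meets_only_hd[OF assms(4)])
  then have avoid: "set L1 \<inter> set L2 = {r}" "q \<notin> set L2"
    using L1 \<open>q \<notin> set L1\<close> by auto
  show ?thesis
  proof (cases "length L2 = Suc b")
    case True
    have "(hd L2, L1 ! 1) \<in> A"
      using L1 L2(1) dpath_not_Nil hd_in_set unfolding fan_to_def by fastforce
    then have "ext_typeII V A b p q r L1 L2"
      using basic L2 True avoid unfolding ext_typeII_def fan_to_def by simp
    moreover have "length L1 + length L2 < 2 * g"
      using assms(1,2,9) True \<open>b \<le> b^2\<close> by linarith
    ultimately show ?thesis
      by (rule small_gadget_if_ext_typeII)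
  next
    case False
    with grown show ?thesis
      using small_gadget_if_second_fan_closes[OF assms(1,2,4,6) basic L1 assms(9) L2 avoid(2)]
      by simp
  qed
qed

lemma small_gadget_at_arc:
  assumes "b \<ge> 1" "g = 4 * b^2" "digraph V A" "girth_ge V A g"
    and arc_cond: "\<forall>(x, y) \<in> A. on_cycle_of_length V A g x y \<or>
                     (\<exists>z \<in> V - {x, y}. (z, x) \<in> A \<and> (z, y) \<in> A)"
    and "(p, q) \<in> A"
  shows "small_gadget V A b g p q"
proof -
  have "b \<le> b^2"
    by (simp add: power2_eq_square)
  define M where "M = 2 * b^2 + b - 2"
  have "M < g"
    using assms(1,2) \<open>b \<le> b^2\<close> unfolding M_def by linarith
  obtain L1 where L1: "fan_to V A q L1" "last L1 = p" "length L1 \<le> Suc M"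
    and grown: "length L1 = Suc M \<or> on_cycle_of_length V A g (hd L1) q"
    by (rule fan_grows_or_closes[OF assms(3,4) arc_cond assms(6) \<open>M < g\<close>])
  show ?thesis
  proof (cases "length L1 = Suc M")
    case True
    then have "length L1 = 2 * b^2 + b - 1"
      using assms(1) \<open>b \<le> b^2\<close> unfolding M_def by linarith
    then show ?thesis
      by (rule small_gadget_if_fan_full[OF assms L1(1,2)])
  next
    case False
    with grown L1(3) \<open>M < g\<close> show ?thesis
      using small_gadget_if_fan_closes[OF assms(4,6) L1(1,2)] by simp
  qed
qed

theorem lemma2p10:
  fixes V :: "'a set" and A :: "('a \<times> 'a) set" and b g :: nat
  assumes "b \<ge> 1"
    and "g = 4 * b^2"
    and "digraph V A"
    and "girth_ge V A g"
    and "\<forall>(x, y) \<in> A. (\<exists>cs. dcycle V A cs \<and> length cs = g \<and> cycle_through cs x y) \<or>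
                        (\<exists>z \<in> V - {x, y}. (z, x) \<in> A \<and> (z, y) \<in> A)"
  shows "\<forall>(p, q) \<in> A.
           (\<exists>cs. typeI_gadget V A g p q cs \<and> card (set cs) \<le> 2 * g) \<or>
           (\<exists>r P1 P2. ext_typeII V A b p q r P1 P2 \<and>
                      card (set P1 \<union> set P2 \<union> {q}) \<le> 2 * g)"
  using small_gadget_at_arc[OF assms(1-4)] assms(5)
  unfolding small_gadget_def on_cycle_of_length_def by blast

end
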